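(* Let $n=2k$ and $\tau$ be positive integers with $1\le\tau\le k$. Let $u_1,\ldots,u_k$ be pairwise distinct elements of $\mathbb{F}_{2^n}$ such that $u_iu_j^{2^k}\in\mathbb{F}_{2^k}^*$ for all $1\le i<j\le k$. Let $F(X_1,\ldots,X_\tau)$ be a reduced polynomial in $\mathbb{F}_2[X_1,\ldots,X_\tau]$ of algebraic degree $d\ge0$, and let $\{i_1,\ldots,i_\tau\}\subseteq\{1,\ldots,k\}$. Then $H(x)=x^{2^k+1}+F(\mathrm{Tr}^n_1(u_{i_1}x),\ldots,\mathrm{Tr}^n_1(u_{i_\tau}x))$ is a vectorial bent $(n,k)$-function. Furthermore, if $u_{i_1},\ldots,u_{i_\tau}$ are linearly independent over $\mathbb{F}_2$ and $d\ge2$, then the algebraic degree of $H$ equals $d$.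
   Context: $\mathrm{Tr}^n_1(x)=\sum_{i=0}^{n-1}x^{2^i}$. $x^{2^k+1}$ takes values in $\mathbb{F}_{2^k}$, so $H:\mathbb{F}_{2^n}\to\mathbb{F}_{2^k}$ (the $F$-term lies in $\mathbb{F}_2$). An $(n,k)$-function $H$ is vectorial bent if every component $\mathrm{Tr}^k_1(\lambda H(x))$, $\lambda\in\mathbb{F}_{2^k}^*$, is a bent Boolean function (i.e. $|\sum_x(-1)^{f(x)+\mathrm{Tr}^n_1(ax)}|=2^{n/2}$ for all $a$). A reduced polynomial is a multilinear polynomial over $\mathbb{F}_2$; its algebraic degree is the largest size of a monomial with nonzero coefficient. The algebraic degree of a vectorial function is the maximum algebraic degree of its coordinate Boolean functions (written as reduced multivariate polynomials over $\mathbb{F}_2$ after identifying $\mathbb{F}_{2^n}$ with $\mathbb{F}_2^n$). *)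

theory Defs
  imports Complex_Main
begin

text \<open>The field F_{2^n} is modelled by a finite field type 'a with CARD('a) = 2^n.
  Elements of the prime field F_2 are 0 and 1 of 'a.\<close>

definition tr :: "nat \<Rightarrow> 'a::field \<Rightarrow> 'a" where
  "tr m x = (\<Sum>i<m. x ^ (2 ^ i))"

definition subF :: "nat \<Rightarrow> 'a::field set" where
  "subF m = {x. x ^ (2 ^ m) = x}"

definition walsh :: "nat \<Rightarrow> ('a::{field,finite} \<Rightarrow> 'a) \<Rightarrow> 'a \<Rightarrow> int" where
  "walsh n f a = (\<Sum>x\<in>UNIV. (if f x + tr n (a * x) = 0 then 1 else -1))"

definition bent :: "nat \<Rightarrow> ('a::{field,finite} \<Rightarrow> 'a) \<Rightarrow> bool" where
  "bent n f \<longleftrightarrow> (\<forall>a. \<bar>real_of_int (walsh n f a)\<bar> = 2 powr (real n / 2))"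

definition vectorial_bent :: "nat \<Rightarrow> nat \<Rightarrow> ('a::{field,finite} \<Rightarrow> 'a) \<Rightarrow> bool" where
  "vectorial_bent n k H \<longleftrightarrow> (\<forall>x. H x \<in> subF k) \<and>
     (\<forall>c\<in>subF k - {0}. bent n (\<lambda>x. tr k (c * H x)))"

text \<open>A reduced polynomial in F_2[X_0,...,X_{t-1}] is given by its set of monomials
  (each monomial a subset of variable indices).\<close>
definition reduced_poly :: "nat \<Rightarrow> nat set set \<Rightarrow> bool" where
  "reduced_poly t S \<longleftrightarrow> S \<subseteq> Pow {..<t}"

definition poly_eval :: "nat set set \<Rightarrow> (nat \<Rightarrow> bool) \<Rightarrow> bool" where
  "poly_eval S b \<longleftrightarrow> odd (card {M\<in>S. \<forall>i\<in>M. b i})"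

definition poly_degree :: "nat set set \<Rightarrow> nat" where
  "poly_degree S = Max (insert 0 (card ` S))"

definition F2_basis :: "(nat \<Rightarrow> 'a::field) \<Rightarrow> nat \<Rightarrow> 'a set \<Rightarrow> bool" where
  "F2_basis e m V \<longleftrightarrow> bij_betw (\<lambda>T. \<Sum>i\<in>T. e i) (Pow {..<m}) V"

definition F2_lin_indep :: "(nat \<Rightarrow> 'a::field) \<Rightarrow> nat \<Rightarrow> bool" where
  "F2_lin_indep v t \<longleftrightarrow> inj_on (\<lambda>T. \<Sum>i\<in>T. v i) (Pow {..<t})"

definition coords :: "(nat \<Rightarrow> 'a::field) \<Rightarrow> nat \<Rightarrow> 'a \<Rightarrow> nat set" where
  "coords w m y = (THE T. T \<subseteq> {..<m} \<and> (\<Sum>i\<in>T. w i) = y)"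

text \<open>g (Boolean function on 'a, identified with F_2^n via basis e) is represented
  by the reduced polynomial with monomial set P.\<close>
definition represents :: "(nat \<Rightarrow> 'a::field) \<Rightarrow> nat \<Rightarrow> ('a \<Rightarrow> bool) \<Rightarrow> nat set set \<Rightarrow> bool" where
  "represents e n g P \<longleftrightarrow> P \<subseteq> Pow {..<n} \<and>
     (\<forall>T\<subseteq>{..<n}. g (\<Sum>i\<in>T. e i) = poly_eval P (\<lambda>i. i \<in> T))"

definition bool_alg_degree :: "(nat \<Rightarrow> 'a::field) \<Rightarrow> nat \<Rightarrow> ('a \<Rightarrow> bool) \<Rightarrow> nat" where
  "bool_alg_degree e n g = poly_degree (THE P. represents e n g P)"

definition vec_alg_degree ::
  "(nat \<Rightarrow> 'a::field) \<Rightarrow> nat \<Rightarrow> (nat \<Rightarrow> 'a) \<Rightarrow> nat \<Rightarrow> ('a \<Rightarrow> 'a) \<Rightarrow> nat" where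
  "vec_alg_degree e n w m H = Max (insert 0 ((\<lambda>j. bool_alg_degree e n (\<lambda>x. j \<in> coords w m (H x))) ` {..<m}))"

end

theory Submission
  imports
    Defs
    "HOL-Computational_Algebra.Polynomial"
    "HOL-Computational_Algebra.Primes"
    "HOL-Library.Disjoint_Sets"
begin

text \<open>
  For \<open>c \<in> subF k - {0}\<close> the component \<open>tr k (c * H x)\<close> is the quadratic form
  \<open>Q x = tr k (c * x ^ (2 ^ k + 1))\<close> plus \<open>tr k c\<close> times a Boolean function of the linear forms
  \<open>tr n (v j * x)\<close>, where \<open>v j = u (idx j)\<close>. The polar form \<open>tr n (c * z ^ 2 ^ k * x)\<close> of \<open>Q\<close> is
  nondegenerate, so \<open>Q\<close> is bent. The hypothesis on the products \<open>u i * u j ^ 2 ^ k\<close> says exactly that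
  the translations by the vectors \<open>w j\<close> with \<open>c * w j ^ 2 ^ k = v j\<close> leave all linear forms unchanged;
  they pair off the Walsh summands with opposite signs outside one level set of the linear forms, so
  every Walsh coefficient of the component is \<open>\<plusminus>\<close> the corresponding one of \<open>Q\<close>.

  In characteristic 2, a Boolean function has algebraic degree \<open>< m\<close> iff all its iterated derivatives
  along \<open>m\<close> directions vanish. The coordinates of \<open>x ^ (2 ^ k + 1)\<close> are quadratic, and \<open>F\<close> evaluated
  at the linear forms has degree at most \<open>deg F\<close>. If the \<open>v j\<close> are independent, there are directions
  dual to the linear forms, and the derivative of \<open>F\<close> along those of a top monomial is \<open>1\<close>; this
  settles \<open>deg F \<ge> 3\<close>. For \<open>deg F = 2\<close> the quadratic parts might cancel, and one compares second
  derivatives along \<open>a, 1\<close> where \<open>a + a ^ 2 ^ k\<close> runs through a basis of \<open>subF k\<close>.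
\<close>

section \<open>Fields of characteristic two\<close>

lemma CHAR_eq_2_if_card_eq_2_power:
  assumes "card (UNIV :: 'a::{field,finite} set) = 2 ^ n" and "n \<noteq> 0"
  shows "CHAR('a) = 2"
proof -
  have "(\<Sum>x\<in>UNIV. x + (1::'a)) = (\<Sum>x\<in>UNIV. x)"
    by (rule sum.reindex_bij_witness[where i="\<lambda>x. x - 1" and j="\<lambda>x. x + 1"]) auto
  then have "of_nat (card (UNIV :: 'a set)) = (0::'a)"
    by (simp add: sum.distrib)
  then have "of_nat 2 = (0::'a)"
    using assms by simp
  then have "CHAR('a) dvd 2"
    by (simp only: of_nat_eq_0_iff_char_dvd)
  then have "CHAR('a) \<le> 2" and "CHAR('a) \<noteq> 0"
    by (simp add: dvd_imp_le, metis dvd_0_left_iff zero_neq_numeral)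
  then show ?thesis
    using CHAR_not_1[where 'a='a] by linarith
qed

lemma two_eq_0_CHAR_2: "CHAR('a::semiring_1) = 2 \<Longrightarrow> (2::'a) = 0"
  by (metis of_nat_CHAR of_nat_numeral)

lemma add_self_CHAR_2: "CHAR('a::ring_1) = 2 \<Longrightarrow> x + x = (0::'a)"
  by (metis minus_CHAR_2 diff_self)

lemma power_2_power_add_CHAR_2:
  "CHAR('a::comm_semiring_1) = 2 \<Longrightarrow> (x + y :: 'a) ^ 2 ^ i = x ^ 2 ^ i + y ^ 2 ^ i"
  by (rule freshmans_dream') simp_all

lemma F2_add_closed:
  "CHAR('a::ring_1) = 2 \<Longrightarrow> y \<in> {0, 1} \<Longrightarrow> z \<in> {0, 1} \<Longrightarrow> (y + z :: 'a) \<in> {0, 1}"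
  using add_self_CHAR_2[of 1] by auto

lemma square_eq_self_imp_F2: "(y::'a::idom) ^ 2 = y \<Longrightarrow> y \<in> {0, 1}"
  by (metis power2_eq_square mult_cancel_right1 insertCI)

lemma power_card_UNIV_eq_self: "(x::'a::{field,finite}) ^ card (UNIV :: 'a set) = x"
proof (cases "x = 0")
  case False
  let ?U = "UNIV - {0::'a}"
  have "(\<Prod>y\<in>?U. x * y) = (\<Prod>y\<in>?U. y)"
    by (rule prod.reindex_bij_witness[where i="\<lambda>y. y / x" and j="\<lambda>y. x * y"]) (use False in auto)
  then have "x ^ card ?U = 1"
    by (simp add: prod.distrib)
  moreover have "card (UNIV :: 'a set) = Suc (card ?U)"
    using finite_UNIV_card_ge_0[where 'a='a] by (simp add: card_Diff_singleton)
  ultimately show ?thesis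
    by (metis power_Suc mult.right_neutral)
qed (simp add: finite_UNIV_card_ge_0)

section \<open>The absolute trace and Walsh sums\<close>

lemma tr_0 [simp]: "tr m (0::'a::field) = 0"
  by (simp add: tr_def power_0_left)

lemma tr_Suc: "tr (Suc m) x = tr m x + x ^ 2 ^ m"
  by (simp add: tr_def)

lemma tr_add_length: "tr (m + j) y = tr m y + tr j (y ^ 2 ^ m)"
proof (induction j)
  case (Suc j)
  have "(y ^ 2 ^ m) ^ 2 ^ j = y ^ 2 ^ (m + j)"
    by (simp add: power_mult[symmetric] power_add)
  with Suc show ?case
    by (simp add: tr_Suc add_ac)
qed (simp add: tr_def)

lemma tr_add: "CHAR('a::field) = 2 \<Longrightarrow> tr m (x + y :: 'a) = tr m x + tr m y"
  by (simp add: tr_def power_2_power_add_CHAR_2 sum.distrib)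

lemma tr_sum:
  assumes "CHAR('a::field) = 2"
  shows "tr m (\<Sum>i\<in>I. f i :: 'a) = (\<Sum>i\<in>I. tr m (f i))"
  by (induction I rule: infinite_finite_induct) (simp_all add: tr_add[OF assms])

lemma tr_in_F2:
  assumes "CHAR('a::field) = 2" and "x ^ 2 ^ m = (x::'a)"
  shows "tr m x \<in> {0, 1}"
proof (rule square_eq_self_imp_F2)
  have "x + tr m (x ^ 2) = tr m x + x"
    using tr_add_length[of 1 m x] tr_Suc[of m x] assms(2) by (simp add: tr_def)
  then have "tr m (x ^ 2) = tr m x"
    by (simp add: add.commute)
  moreover have "tr m x ^ 2 = tr m (x ^ 2)"
    unfolding tr_def by (simp add: freshmans_dream_sum'[where n=1] assms(1) power_mult[symmetric] mult.commute)
  ultimately show "tr m x ^ 2 = tr m x"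
    by simp
qed

lemma tr_mult_F2: "c \<in> {0, 1} \<Longrightarrow> tr m (c * x) = c * tr m (x::'a::field)"
  by auto

definition chi :: "'a::zero \<Rightarrow> int" where
  "chi y = (if y = 0 then 1 else -1)"

lemma abs_chi [simp]: "\<bar>chi y\<bar> = 1"
  by (simp add: chi_def)

lemma chi_add:
  "CHAR('a::ring_1) = 2 \<Longrightarrow> y \<in> {0, 1} \<Longrightarrow> z \<in> {0, 1} \<Longrightarrow> chi (y + z :: 'a) = chi y * chi z"
  using add_self_CHAR_2[of "1::'a"] by (auto simp: chi_def)

lemma walsh_eq_sum_chi: "walsh n f a = (\<Sum>x\<in>UNIV. chi (f x + tr n (a * x)))"
  by (simp add: walsh_def chi_def)

section \<open>Discrete derivatives\<close>

fun diff_along :: "'a::plus list \<Rightarrow> ('a \<Rightarrow> 'b::plus) \<Rightarrow> 'a \<Rightarrow> 'b" where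
  "diff_along [] g = g"
| "diff_along (a # as) g = diff_along as (\<lambda>y. g (y + a) + g y)"

lemma diff_along_add:
  fixes f g :: "'a::plus \<Rightarrow> 'b::ab_semigroup_add"
  shows "diff_along as (\<lambda>y. f y + g y) x = diff_along as f x + diff_along as g x"
proof (induction as arbitrary: f g)
  case (Cons a as)
  have "(\<lambda>y. f (y + a) + g (y + a) + (f y + g y)) = (\<lambda>y. (f (y + a) + f y) + (g (y + a) + g y))"
    by (simp add: add_ac)
  then show ?case
    using Cons[of "\<lambda>y. f (y + a) + f y" "\<lambda>y. g (y + a) + g y"] by simp
qed simp

lemma diff_along_0: "diff_along as (\<lambda>y. 0 :: 'b::monoid_add) x = 0"
  by (induction as) simp_all

lemma diff_along_sum:
  fixes f :: "'i \<Rightarrow> 'a::plus \<Rightarrow> 'b::comm_monoid_add"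
  shows "diff_along as (\<lambda>y. \<Sum>i\<in>I. f i y) x = (\<Sum>i\<in>I. diff_along as (f i) x)"
  by (induction I rule: infinite_finite_induct) (simp_all add: diff_along_0 diff_along_add)

lemma diff_along_mult_left:
  fixes f :: "'a::plus \<Rightarrow> 'b::semiring_0"
  shows "diff_along as (\<lambda>y. c * f y) x = c * diff_along as f x"
proof (induction as arbitrary: f)
  case (Cons a as)
  have "(\<lambda>y. c * f (y + a) + c * f y) = (\<lambda>y. c * (f (y + a) + f y))"
    by (simp add: distrib_left)
  then show ?case
    using Cons[of "\<lambda>y. f (y + a) + f y"] by simp
qed simp

lemma diff_along_const:
  "CHAR('b::ring_1) = 2 \<Longrightarrow> as \<noteq> [] \<Longrightarrow> diff_along as (\<lambda>y. c :: 'b) x = 0"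
  by (cases as) (simp_all add: add_self_CHAR_2 diff_along_0)

context
  fixes L :: "nat \<Rightarrow> 'a::monoid_add \<Rightarrow> 'b::comm_ring_1"
  assumes CHAR_2: "CHAR('b) = 2" and L_add: "\<And>i x y. L i (x + y) = L i x + L i y"
begin

lemma diff_along_prod_additive_eq_0:
  "finite M \<Longrightarrow> card M < length as \<Longrightarrow> diff_along as (\<lambda>y. \<Prod>i\<in>M. L i y) x = 0"
proof (induction as arbitrary: M)
  case (Cons a as)
  have "(\<Prod>i\<in>M. L i (y + a)) + (\<Prod>i\<in>M. L i y) = (\<Sum>B\<in>Pow M - {M}. (\<Prod>i\<in>M - B. L i a) * (\<Prod>i\<in>B. L i y))"
    for y
  proof -
    have "(\<Prod>i\<in>M. L i (y + a)) = (\<Sum>B\<in>Pow M. (\<Prod>i\<in>B. L i y) * (\<Prod>i\<in>M - B. L i a))"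
      by (simp add: L_add prod_add[OF Cons.prems(1)])
    also have "\<dots> = (\<Sum>B\<in>Pow M - {M}. (\<Prod>i\<in>M - B. L i a) * (\<Prod>i\<in>B. L i y)) + (\<Prod>i\<in>M. L i y)"
      using Cons.prems(1) by (subst sum.remove[of _ M]) (auto simp: add.commute mult.commute)
    finally show ?thesis
      using add_self_CHAR_2[OF CHAR_2, of "\<Prod>i\<in>M. L i y"] by (simp add: add.assoc)
  qed
  then have "diff_along (a # as) (\<lambda>y. \<Prod>i\<in>M. L i y) x
      = (\<Sum>B\<in>Pow M - {M}. (\<Prod>i\<in>M - B. L i a) * diff_along as (\<lambda>y. \<Prod>i\<in>B. L i y) x)"
    by (simp add: diff_along_sum diff_along_mult_left)
  also have "\<dots> = 0"
  proof (intro sum.neutral ballI)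
    fix B
    assume "B \<in> Pow M - {M}"
    then have "finite B" and "card B < card M"
      using Cons.prems(1) by (auto intro: finite_subset psubset_card_mono)
    with Cons show "(\<Prod>i\<in>M - B. L i a) * diff_along as (\<lambda>y. \<Prod>i\<in>B. L i y) x = 0"
      by simp
  qed
  finally show ?case .
qed simp

lemma diff_along_prod_additive_dual:
  assumes "finite M" and "distinct ms"
    and "\<And>m i. m \<in> set ms \<Longrightarrow> i \<in> M \<Longrightarrow> L i (d m) = (if i = m then 1 else 0)"
  shows "diff_along (map d ms) (\<lambda>y. \<Prod>i\<in>M. L i y) x
    = (if set ms \<subseteq> M then \<Prod>i\<in>M - set ms. L i x else 0)"
  using assms
proof (induction ms arbitrary: M)
  case (Cons m ms)
  show ?case
  proof (cases "m \<in> M")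
    case True
    have "(\<Prod>i\<in>M. L i (y + d m)) + (\<Prod>i\<in>M. L i y) = (\<Prod>i\<in>M - {m}. L i y)" for y
    proof -
      have "(\<Prod>i\<in>M - {m}. L i (y + d m)) = (\<Prod>i\<in>M - {m}. L i y)"
        using Cons.prems(3) by (intro prod.cong) (auto simp: L_add)
      moreover have "L m (y + d m) = L m y + 1"
        using Cons.prems(3) True by (simp add: L_add)
      ultimately show ?thesis
        using prod.remove[OF Cons.prems(1) True, of "\<lambda>i. L i (y + d m)"]
          prod.remove[OF Cons.prems(1) True, of "\<lambda>i. L i y"]
          add_self_CHAR_2[OF CHAR_2, of "L m y * (\<Prod>i\<in>M - {m}. L i y)"]
        by (simp add: distrib_right add_ac)
    qed
    moreover have "diff_along (map d ms) (\<lambda>y. \<Prod>i\<in>M - {m}. L i y) x =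
        (if set ms \<subseteq> M - {m} then \<Prod>i\<in>M - {m} - set ms. L i x else 0)"
      using Cons.prems by (intro Cons.IH) auto
    moreover have "M - {m} - set ms = M - set (m # ms)" and "set ms \<subseteq> M - {m} \<longleftrightarrow> set (m # ms) \<subseteq> M"
      using Cons.prems(2) True by auto
    ultimately show ?thesis
      by simp
  next
    case False
    have "(\<Prod>i\<in>M. L i (y + d m)) = (\<Prod>i\<in>M. L i y)" for y
      using Cons.prems(3) False by (intro prod.cong) (auto simp: L_add)
    with False show ?thesis
      by (simp add: add_self_CHAR_2[OF CHAR_2] diff_along_0)
  qed
qed simp

lemma diff_along_sum_prod_additive_dual:
  assumes "finite P" and "\<And>M. M \<in> P \<Longrightarrow> finite M" and "distinct ms"
    and "\<And>m M i. m \<in> set ms \<Longrightarrow> M \<in> P \<Longrightarrow> i \<in> M \<Longrightarrow> L i (d m) = (if i = m then 1 else 0)"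
  shows "diff_along (map d ms) (\<lambda>y. \<Sum>M\<in>P. \<Prod>i\<in>M. L i y) 0 = (if set ms \<in> P then 1 else 0)"
proof -
  have L_0: "L i 0 = 0" for i
    using L_add[of i 0 0] by simp
  have "diff_along (map d ms) (\<lambda>y. \<Prod>i\<in>M. L i y) 0 = (if M = set ms then 1 else 0)" if "M \<in> P" for M
  proof -
    have "diff_along (map d ms) (\<lambda>y. \<Prod>i\<in>M. L i y) 0 = (if set ms \<subseteq> M then \<Prod>i\<in>M - set ms. L i 0 else 0)"
      using assms that by (intro diff_along_prod_additive_dual) auto
    also have "\<dots> = (if M = set ms then 1 else 0)"
      using assms(2)[OF that] by (auto simp: L_0 power_0_left)
    finally show ?thesis .
  qed
  then show ?thesis
    using assms(1) by (simp add: diff_along_sum sum.delta' cong: sum.cong)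
qed

end

section \<open>Coordinates and algebraic normal forms\<close>

lemma sum_symmetric_difference_CHAR_2:
  fixes f :: "'i \<Rightarrow> 'a::ring_1"
  assumes "CHAR('a) = 2" and "finite A" and "finite B"
  shows "sum f A + sum f B = sum f (sym_diff A B)"
proof -
  have "sum f A = sum f (A \<inter> B) + sum f (A - B)" and "sum f B = sum f (A \<inter> B) + sum f (B - A)"
    using assms(2,3) by (metis sum.Int_Diff, metis sum.Int_Diff inf_commute)
  moreover have "sum f (sym_diff A B) = sum f (A - B) + sum f (B - A)"
    using assms(2,3) by (intro sum.union_disjoint) auto
  ultimately show ?thesis
    using add_self_CHAR_2[OF assms(1), of "sum f (A \<inter> B)"] by (simp add: add_ac)
qed

definition coord :: "(nat \<Rightarrow> 'a::field) \<Rightarrow> nat \<Rightarrow> nat \<Rightarrow> 'a \<Rightarrow> 'a" where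
  "coord b m i x = of_bool (i \<in> coords b m x)"

context
  fixes b :: "nat \<Rightarrow> 'a::field" and m :: nat and V :: "'a set"
  assumes CHAR_2: "CHAR('a) = 2" and basis: "F2_basis b m V"
begin

lemma coords_sum_basis: "T \<subseteq> {..<m} \<Longrightarrow> coords b m (\<Sum>i\<in>T. b i) = T"
  unfolding coords_def
proof (rule the_equality)
  fix T'
  assume "T \<subseteq> {..<m}" and "T' \<subseteq> {..<m} \<and> (\<Sum>i\<in>T'. b i) = (\<Sum>i\<in>T. b i)"
  moreover have "inj_on (\<lambda>T. \<Sum>i\<in>T. b i) (Pow {..<m})"
    using basis unfolding F2_basis_def by (rule bij_betw_imp_inj_on)
  ultimately show "T' = T"
    by (auto dest: inj_onD)
qed simp

lemma coords_basis_expansion: "x \<in> V \<Longrightarrow> coords b m x \<subseteq> {..<m} \<and> (\<Sum>i\<in>coords b m x. b i) = x"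
  using basis coords_sum_basis unfolding F2_basis_def bij_betw_def by auto

lemma basis_mem:
  assumes "j < m"
  shows "b j \<in> V"
proof -
  have "sum b {j} \<in> sum b ` Pow {..<m}"
    using assms by (intro imageI) auto
  then show ?thesis
    using basis by (simp add: F2_basis_def bij_betw_def)
qed

lemma card_basis_span: "card V = 2 ^ m"
  using bij_betw_same_card[OF basis[unfolded F2_basis_def]] by (simp add: card_Pow)

lemma coord_add:
  assumes "x \<in> V" and "y \<in> V" and "x + y \<in> V"
  shows "coord b m i (x + y) = coord b m i x + coord b m i y"
proof -
  let ?X = "coords b m x" and ?Y = "coords b m y"
  have "finite ?X" "finite ?Y"
    using coords_basis_expansion assms(1,2) finite_subset by blast+
  then have "x + y = (\<Sum>i\<in>sym_diff ?X ?Y. b i)"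
    using coords_basis_expansion[OF assms(1)] coords_basis_expansion[OF assms(2)]
      sum_symmetric_difference_CHAR_2[OF CHAR_2] by metis
  moreover have "sym_diff ?X ?Y \<subseteq> {..<m}"
    using coords_basis_expansion[OF assms(1)] coords_basis_expansion[OF assms(2)] by auto
  ultimately have "coords b m (x + y) = sym_diff ?X ?Y"
    by (simp add: coords_sum_basis)
  then show ?thesis
    unfolding coord_def using two_eq_0_CHAR_2[OF CHAR_2]
    by (cases "i \<in> ?X"; cases "i \<in> ?Y") simp_all
qed

lemma coord_basis: "j < m \<Longrightarrow> coord b m i (b j) = (if i = j then 1 else 0)"
  using coords_sum_basis[of "{j}"] by (auto simp: coord_def)

lemma coord_0: "coord b m i 0 = 0"
  using coords_sum_basis[of "{}"] by (simp add: coord_def)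

end

definition coord_bool :: "(nat \<Rightarrow> 'a::field) \<Rightarrow> nat \<Rightarrow> ('b \<Rightarrow> 'a) \<Rightarrow> nat \<Rightarrow> 'b \<Rightarrow> bool" where
  "coord_bool w m H j = (\<lambda>y. j \<in> coords w m (H y))"

lemma prod_of_bool: "finite M \<Longrightarrow> (\<Prod>i\<in>M. of_bool (\<beta> i) :: 'a::comm_semiring_1) = of_bool (\<forall>i\<in>M. \<beta> i)"
  by (induction M rule: finite_induct) auto

lemma of_bool_odd_CHAR_2: "CHAR('a::ring_1) = 2 \<Longrightarrow> (of_bool (odd j) :: 'a) = of_nat j"
  by (induction j) (auto simp: two_eq_0_CHAR_2 add.commute)

lemma of_bool_poly_eval:
  fixes P :: "nat set set"
  assumes "CHAR('a::comm_ring_1) = 2" and "finite P" and "\<And>M. M \<in> P \<Longrightarrow> finite M"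
  shows "(of_bool (poly_eval P \<beta>) :: 'a) = (\<Sum>M\<in>P. \<Prod>i\<in>M. of_bool (\<beta> i))"
proof -
  have "(of_bool (poly_eval P \<beta>) :: 'a) = of_nat (card {M\<in>P. \<forall>i\<in>M. \<beta> i})"
    unfolding poly_eval_def by (rule of_bool_odd_CHAR_2[OF assms(1)])
  also have "\<dots> = (\<Sum>M\<in>P. of_bool (\<forall>i\<in>M. \<beta> i))"
    using assms(2) by (simp add: Collect_conj_eq Int_commute)
  also have "\<dots> = (\<Sum>M\<in>P. \<Prod>i\<in>M. of_bool (\<beta> i))"
    using assms(3) by (intro sum.cong refl) (simp add: prod_of_bool)
  finally show ?thesis .
qed

lemma poly_eval_cong:
  assumes "reduced_poly \<tau> S" and "\<And>j. j < \<tau> \<Longrightarrow> b j = b' j"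
  shows "poly_eval S b = poly_eval S b'"
proof -
  have "{M\<in>S. \<forall>i\<in>M. b i} = {M\<in>S. \<forall>i\<in>M. b' i}"
    using assms unfolding reduced_poly_def by auto
  then show ?thesis
    by (simp add: poly_eval_def)
qed

lemma reduced_poly_finite:
  assumes "reduced_poly \<tau> S"
  shows "finite S" and "M \<in> S \<Longrightarrow> finite M" and "M \<in> S \<Longrightarrow> M \<subseteq> {..<\<tau>}"
  using assms unfolding reduced_poly_def by (auto intro: finite_subset[of _ "Pow {..<\<tau>}"] finite_subset)

context
  fixes e :: "nat \<Rightarrow> 'a::field" and n :: nat
  assumes CHAR_2: "CHAR('a) = 2" and basis: "F2_basis e n UNIV"
begin

lemma coord_add_UNIV: "coord e n i (x + y) = coord e n i x + coord e n i y"
  by (rule coord_add[OF CHAR_2 basis]) simp_all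

lemma represents_finite: "represents e n g P \<Longrightarrow> finite P \<and> (\<forall>M\<in>P. finite M \<and> M \<subseteq> {..<n})"
  unfolding represents_def by (auto intro: finite_subset)

lemma of_bool_represented:
  assumes "represents e n g P"
  shows "(of_bool (g x) :: 'a) = (\<Sum>M\<in>P. \<Prod>i\<in>M. coord e n i x)"
proof -
  let ?T = "coords e n x"
  have "?T \<subseteq> {..<n}" and "(\<Sum>i\<in>?T. e i) = x"
    using coords_basis_expansion[OF CHAR_2 basis, of x] by auto
  then have "g x = poly_eval P (\<lambda>i. i \<in> ?T)"
    using assms unfolding represents_def by metis
  then show ?thesis
    using of_bool_poly_eval[OF CHAR_2, of P] represents_finite[OF assms] by (simp add: coord_def)
qed

lemma diff_along_represented:
  assumes "represents e n g P" and "M \<subseteq> {..<n}"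
  shows "diff_along (map e (sorted_list_of_set M)) (\<lambda>y. of_bool (g y)) 0 = (if M \<in> P then 1 else (0::'a))"
proof -
  have "finite M"
    using assms(2) finite_subset by auto
  have "diff_along (map e (sorted_list_of_set M)) (\<lambda>y. \<Sum>M\<in>P. \<Prod>i\<in>M. coord e n i y) 0
      = (if set (sorted_list_of_set M) \<in> P then 1 else 0)"
  proof (rule diff_along_sum_prod_additive_dual[OF CHAR_2 coord_add_UNIV])
    fix m i
    assume "m \<in> set (sorted_list_of_set M)"
    then show "coord e n i (e m) = (if i = m then 1 else 0)"
      using assms(2) \<open>finite M\<close> coord_basis[OF CHAR_2 basis, of m i] by auto
  qed (use represents_finite[OF assms(1)] \<open>finite M\<close> in auto)
  then show ?thesis
    using of_bool_represented[OF assms(1)] \<open>finite M\<close> by simp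
qed

lemma represents_unique:
  assumes "represents e n g P" and "represents e n g P'"
  shows "P = P'"
proof (rule set_eqI)
  fix M
  show "M \<in> P \<longleftrightarrow> M \<in> P'"
  proof (cases "M \<subseteq> {..<n}")
    case True
    then show ?thesis
      using diff_along_represented[OF assms(1) True] diff_along_represented[OF assms(2) True]
      by (auto split: if_splits)
  next
    case False
    then show ?thesis
      using assms unfolding represents_def by auto
  qed
qed

lemma represents_exists: "\<exists>P. represents e n g P"
proof -
  define \<Phi> where "\<Phi> P = {T\<in>Pow {..<n}. poly_eval P (\<lambda>i. i \<in> T)}" for P
  have represents_\<Phi>: "represents e n (\<lambda>x. coords e n x \<in> \<Phi> P) P" if "P \<in> Pow (Pow {..<n})" for P
    using that coords_sum_basis[OF CHAR_2 basis] unfolding represents_def \<Phi>_def by auto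
  have "inj_on \<Phi> (Pow (Pow {..<n}))"
  proof (rule inj_onI)
    fix P P'
    assume "P \<in> Pow (Pow {..<n})" "P' \<in> Pow (Pow {..<n})" "\<Phi> P = \<Phi> P'"
    then show "P = P'"
      using represents_unique[OF represents_\<Phi>[of P]] represents_\<Phi>[of P'] by simp
  qed
  then have "\<Phi> ` Pow (Pow {..<n}) = Pow (Pow {..<n})"
    by (rule endo_inj_surj[rotated 2]) (auto simp: \<Phi>_def)
  then have "{T\<in>Pow {..<n}. g (\<Sum>i\<in>T. e i)} \<in> \<Phi> ` Pow (Pow {..<n})"
    by auto
  then obtain P where "P \<in> Pow (Pow {..<n})" and "{T\<in>Pow {..<n}. g (\<Sum>i\<in>T. e i)} = \<Phi> P"
    by (rule imageE)
  then have "represents e n g P"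
    unfolding represents_def \<Phi>_def by blast
  then show ?thesis ..
qed

lemma represents_The: "represents e n g (THE P. represents e n g P)"
  using represents_exists represents_unique by (metis theI)

lemma bool_alg_degree_le_iff:
  "bool_alg_degree e n g \<le> r \<longleftrightarrow> (\<forall>as (x::'a). r < length as \<longrightarrow> diff_along as (\<lambda>y. of_bool (g y) :: 'a) x = 0)"
proof -
  define P where "P = (THE P. represents e n g P)"
  have P: "represents e n g P"
    unfolding P_def by (rule represents_The)
  have "finite P" and P_sets: "\<And>M. M \<in> P \<Longrightarrow> finite M \<and> M \<subseteq> {..<n}"
    using represents_finite[OF P] by auto
  have "bool_alg_degree e n g \<le> r \<longleftrightarrow> (\<forall>M\<in>P. card M \<le> r)"
    unfolding bool_alg_degree_def poly_degree_def P_def[symmetric] using \<open>finite P\<close> by (simp add: Max_le_iff)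
  also have "\<dots> \<longleftrightarrow> (\<forall>as (x::'a). r < length as \<longrightarrow> diff_along as (\<lambda>y. of_bool (g y) :: 'a) x = 0)"
  proof
    assume deg: "\<forall>M\<in>P. card M \<le> r"
    show "\<forall>as x. r < length as \<longrightarrow> diff_along as (\<lambda>y. of_bool (g y) :: 'a) x = 0"
    proof (intro allI impI)
      fix as :: "'a list" and x :: 'a
      assume "r < length as"
      then have "diff_along as (\<lambda>y. \<Prod>i\<in>M. coord e n i y) x = 0" if "M \<in> P" for M
        using deg that P_sets[OF that]
        by (intro diff_along_prod_additive_eq_0[OF CHAR_2 coord_add_UNIV]) auto
      moreover have "(\<lambda>y. of_bool (g y) :: 'a) = (\<lambda>y. \<Sum>M\<in>P. \<Prod>i\<in>M. coord e n i y)"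
        using of_bool_represented[OF P] by auto
      ultimately show "diff_along as (\<lambda>y. of_bool (g y) :: 'a) x = 0"
        by (simp add: diff_along_sum)
    qed
  next
    assume vanish: "\<forall>as (x::'a). r < length as \<longrightarrow> diff_along as (\<lambda>y. of_bool (g y) :: 'a) x = 0"
    show "\<forall>M\<in>P. card M \<le> r"
    proof (rule ballI, rule ccontr)
      fix M
      assume "M \<in> P" and "\<not> card M \<le> r"
      then have "diff_along (map e (sorted_list_of_set M)) (\<lambda>y. of_bool (g y) :: 'a) 0 = 0"
        using vanish[rule_format, of "map e (sorted_list_of_set M)" 0] P_sets by simp
      moreover have "diff_along (map e (sorted_list_of_set M)) (\<lambda>y. of_bool (g y) :: 'a) 0 = 1"
        using diff_along_represented[OF P, of M] P_sets \<open>M \<in> P\<close> by simp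
      ultimately show False
        by simp
    qed
  qed
  finally show ?thesis .
qed

lemma bool_alg_degree_ge_if_diff_along_neq_0:
  assumes "diff_along as (\<lambda>y. of_bool (g y) :: 'a) x \<noteq> 0"
  shows "length as \<le> bool_alg_degree e n g"
proof (rule ccontr)
  assume "\<not> length as \<le> bool_alg_degree e n g"
  then have "bool_alg_degree e n g \<le> length as - 1" and "length as - 1 < length as"
    by auto
  with assms show False
    unfolding bool_alg_degree_le_iff by blast
qed

end

section \<open>Finite fields of order \<open>2 ^ n\<close>\<close>

context
  fixes n :: nat
  assumes card_UNIV: "card (UNIV :: 'a::{field,finite} set) = 2 ^ n"
begin

lemma n_nonzero: "n \<noteq> 0"
proof
  assume "n = 0"
  moreover have "card {0::'a, 1} \<le> card (UNIV :: 'a set)"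
    by (rule card_mono) simp_all
  ultimately show False
    using card_UNIV by simp
qed

lemma tr_not_identically_0: "\<exists>x::'a. tr n x \<noteq> 0"
proof (rule ccontr)
  assume "\<not> ?thesis"
  then have tr_0_everywhere: "tr n x = 0" for x :: 'a
    by simp
  define p :: "'a poly" where "p = (\<Sum>i<n. monom 1 (2 ^ i))"
  have "coeff p (2 ^ (n - 1)) = (\<Sum>i<n. if 2 ^ i = (2::nat) ^ (n - 1) then 1 else 0)"
    by (simp add: p_def coeff_sum coeff_monom)
  also have "\<dots> = (\<Sum>i\<in>{n - 1}. 1)"
    by (rule sum.mono_neutral_cong_right) (use n_nonzero in auto)
  finally have "p \<noteq> 0"
    by auto
  have "degree p \<le> 2 ^ (n - 1)"
  proof (rule degree_le, intro allI impI)
    fix j :: nat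
    assume "2 ^ (n - 1) < j"
    moreover have "(2::nat) ^ i \<le> 2 ^ (n - 1)" if "i < n" for i
      using that by (intro power_increasing) auto
    ultimately have "(2::nat) ^ i \<noteq> j" if "i < n" for i
      using that by fastforce
    then show "coeff p j = 0"
      by (simp add: p_def coeff_sum coeff_monom)
  qed
  moreover have "{x. poly p x = 0} = UNIV"
    using tr_0_everywhere by (simp add: p_def tr_def poly_sum poly_monom)
  then have "2 ^ n \<le> degree p"
    using card_poly_roots_bound[OF \<open>p \<noteq> 0\<close>] card_UNIV by simp
  moreover have "(2::nat) ^ (n - 1) < 2 ^ n"
    using n_nonzero by simp
  ultimately show False
    by linarith
qed

lemma CHAR_eq_2: "CHAR('a) = 2"
  using CHAR_eq_2_if_card_eq_2_power card_UNIV n_nonzero .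

lemma power_2_power_n: "(x::'a) ^ 2 ^ n = x"
  using power_card_UNIV_eq_self[of x] by (simp add: card_UNIV)

lemma tr_n_in_F2: "tr n (x::'a) \<in> {0, 1}"
  by (rule tr_in_F2[OF CHAR_eq_2 power_2_power_n])

lemma sum_chi_tr_mult: "(\<Sum>x\<in>UNIV. chi (tr n (b * x :: 'a))) = (if b = 0 then 2 ^ n else 0)"
proof (cases "b = 0")
  case True
  then show ?thesis
    by (simp add: chi_def card_UNIV)
next
  case False
  obtain x0 :: 'a where "tr n x0 \<noteq> 0"
    using tr_not_identically_0 by blast
  then have "tr n (b * (x0 / b)) = 1"
    using tr_n_in_F2[of x0] False by simp
  have "(\<Sum>x\<in>UNIV. chi (tr n (b * x))) = 0"
  proof (rule sum_involution_eq_0[where h="\<lambda>x. x + x0 / b"])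
    fix x :: 'a
    have "chi (tr n (b * (x + x0 / b))) = - chi (tr n (b * x))"
      using \<open>tr n (b * (x0 / b)) = 1\<close> chi_add[OF CHAR_eq_2 tr_n_in_F2, where z=1]
      by (simp add: distrib_left tr_add[OF CHAR_eq_2] chi_def)
    then show "chi (tr n (b * (x + x0 / b))) + chi (tr n (b * x)) = 0"
      by simp
    show "x + x0 / b + x0 / b = x"
      using add_self_CHAR_2[OF CHAR_eq_2, of "x0 / b"] by (simp add: add.assoc)
    show "x + x0 / b \<noteq> x"
      using \<open>tr n (b * (x0 / b)) = 1\<close> by auto
  qed simp
  with False show ?thesis
    by simp
qed

lemma walsh_square_if_polar_nondegenerate:
  fixes f L :: "'a \<Rightarrow> 'a"
  assumes f_F2: "\<And>x. f x \<in> {0, 1}"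
    and polar: "\<And>x z. f (x + z) = f x + f z + tr n (L z * x)"
    and L_eq_0_iff: "\<And>z. L z = 0 \<longleftrightarrow> z = 0"
  shows "walsh n f a ^ 2 = 2 ^ n"
proof -
  define t where "t x = chi (f x + tr n (a * x))" for x
  have t_F2: "f x + tr n (a * x) \<in> {0, 1}" for x
    by (rule F2_add_closed[OF CHAR_eq_2 f_F2 tr_n_in_F2])
  have "f 0 = 0"
    using polar[of 0 0] L_eq_0_iff[of 0] add_self_CHAR_2[OF CHAR_eq_2, of "f 0"] by simp
  have t_shift: "t x * t (x + z) = t z * chi (tr n (L z * x))" for x z
  proof -
    have "f (x + z) + tr n (a * (x + z))
        = (f x + tr n (a * x)) + ((f z + tr n (a * z)) + tr n (L z * x))"
      by (simp add: polar distrib_left tr_add[OF CHAR_eq_2] add_ac)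
    then have "t (x + z) = t x * (t z * chi (tr n (L z * x)))"
      unfolding t_def
      by (simp add: chi_add[OF CHAR_eq_2 t_F2 F2_add_closed[OF CHAR_eq_2 t_F2 tr_n_in_F2]]
          chi_add[OF CHAR_eq_2 t_F2 tr_n_in_F2])
    moreover have "t x * t x = 1"
      by (simp add: t_def chi_def)
    ultimately show ?thesis
      by (simp add: mult.assoc[symmetric])
  qed
  have "walsh n f a ^ 2 = (\<Sum>x\<in>UNIV. t x) * (\<Sum>y\<in>UNIV. t y)"
    by (simp add: walsh_eq_sum_chi t_def power2_eq_square)
  also have "\<dots> = (\<Sum>x\<in>UNIV. t x * (\<Sum>z\<in>UNIV. t (x + z)))"
    unfolding sum_distrib_right
  proof (rule sum.cong[OF refl])
    fix x
    have "(\<Sum>y\<in>UNIV. t y) = (\<Sum>z\<in>UNIV. t (x + z))"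
      by (rule sum.reindex_bij_witness[where j="\<lambda>y. y - x" and i="\<lambda>z. x + z"]) auto
    then show "t x * (\<Sum>y\<in>UNIV. t y) = t x * (\<Sum>z\<in>UNIV. t (x + z))"
      by simp
  qed
  also have "\<dots> = (\<Sum>x\<in>UNIV. \<Sum>z\<in>UNIV. t x * t (x + z))"
    by (simp add: sum_distrib_left)
  also have "\<dots> = (\<Sum>z\<in>UNIV. \<Sum>x\<in>UNIV. t z * chi (tr n (L z * x)))"
    by (subst sum.swap) (simp only: t_shift)
  also have "\<dots> = (\<Sum>z\<in>UNIV. t z * (\<Sum>x\<in>UNIV. chi (tr n (L z * x))))"
    by (simp add: sum_distrib_left)
  also have "\<dots> = (\<Sum>z\<in>UNIV. if z = (0::'a) then t 0 * 2 ^ n else 0)"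
    by (intro sum.cong refl) (simp add: sum_chi_tr_mult L_eq_0_iff)
  also have "\<dots> = 2 ^ n"
    by (simp add: t_def \<open>f 0 = 0\<close> chi_def)
  finally show ?thesis .
qed

text \<open>Translation by \<open>w i\<close> leaves the linear forms \<open>tr n (v j * x)\<close> unchanged and changes the
  sign of the Walsh summand exactly when the \<open>i\<close>-th form differs from \<open>\<beta> i\<close>. Hence only the points
  where all forms agree with \<open>\<beta>\<close> contribute, and there \<open>G\<close> is constant.\<close>

lemma sum_chi_off_pattern_eq_0:
  fixes f L :: "'a \<Rightarrow> 'a" and v w :: "nat \<Rightarrow> 'a" and G :: "(nat \<Rightarrow> bool) \<Rightarrow> 'a" and a :: 'a
  assumes f_F2: "\<And>x. f x \<in> {0, 1}"
    and polar: "\<And>x z. f (x + z) = f x + f z + tr n (L z * x)"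
    and L_w: "\<And>i. i < \<tau> \<Longrightarrow> L (w i) = v i"
    and orth: "\<And>i j. i < \<tau> \<Longrightarrow> j < \<tau> \<Longrightarrow> tr n (v j * w i) = 0"
    and G_F2: "\<And>b. G b \<in> {0, 1}"
    and G_cong: "\<And>b b'. (\<And>j. j < \<tau> \<Longrightarrow> b j = b' j) \<Longrightarrow> G b = G b'"
  defines "\<beta> j \<equiv> f (w j) + tr n (a * w j) \<noteq> 0"
  shows "(\<Sum>x\<in>{x. \<exists>j<\<tau>. (tr n (v j * x) \<noteq> 0) \<noteq> \<beta> j}.
      chi (f x + G (\<lambda>j. tr n (v j * x) \<noteq> 0) + tr n (a * x))) = 0"
proof -
  define bits where "bits x = (\<lambda>j. tr n (v j * x) \<noteq> 0)" for x
  define A where "A = {x. \<exists>j<\<tau>. bits x j \<noteq> \<beta> j}"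
  define i where "i x = (LEAST j. j < \<tau> \<and> bits x j \<noteq> \<beta> j)" for x
  define \<sigma> where "\<sigma> x = x + w (i x)" for x
  define T where "T x = chi (f x + G (bits x) + tr n (a * x))" for x
  have i: "i x < \<tau>" "bits x (i x) \<noteq> \<beta> (i x)" if "x \<in> A" for x
    using that LeastI_ex[of "\<lambda>j. j < \<tau> \<and> bits x j \<noteq> \<beta> j"] by (auto simp: A_def i_def)
  have bits_\<sigma>: "bits (\<sigma> x) j = bits x j" if "x \<in> A" "j < \<tau>" for x j
    using orth[OF i(1)[OF that(1)] that(2)]
    by (simp add: bits_def \<sigma>_def distrib_left tr_add[OF CHAR_eq_2])
  have \<sigma>_A: "\<sigma> x \<in> A" if "x \<in> A" for x
    using that bits_\<sigma>[OF that] by (auto simp: A_def)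
  have i_\<sigma>: "i (\<sigma> x) = i x" if "x \<in> A" for x
  proof -
    have "(\<lambda>j. j < \<tau> \<and> bits (\<sigma> x) j \<noteq> \<beta> j) = (\<lambda>j. j < \<tau> \<and> bits x j \<noteq> \<beta> j)"
      using bits_\<sigma>[OF that] by auto
    then show ?thesis
      by (simp only: i_def)
  qed
  have \<sigma>_\<sigma>: "\<sigma> (\<sigma> x) = x" if "x \<in> A" for x
  proof -
    have "\<sigma> (\<sigma> x) = \<sigma> x + w (i x)"
      using \<sigma>_def[of "\<sigma> x"] i_\<sigma>[OF that] by simp
    then show ?thesis
      using add_self_CHAR_2[OF CHAR_eq_2, of "w (i x)"] by (simp add: \<sigma>_def add.assoc)
  qed
  have "(\<Sum>x\<in>A. T x) = 0"
  proof (rule sum_involution_eq_0[where h=\<sigma>])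
    fix x
    assume "x \<in> A"
    let ?w = "w (i x)"
    have "f ?w + tr n (a * ?w) + tr n (v (i x) * x) = 1"
      using i[OF \<open>x \<in> A\<close>] F2_add_closed[OF CHAR_eq_2 f_F2[of ?w] tr_n_in_F2[of "a * ?w"]]
        tr_n_in_F2[of "v (i x) * x"] add_self_CHAR_2[OF CHAR_eq_2, of 1]
      by (auto simp: bits_def \<beta>_def)
    moreover have "G (bits (\<sigma> x)) = G (bits x)"
      using G_cong bits_\<sigma>[OF \<open>x \<in> A\<close>] by blast
    ultimately have "f (\<sigma> x) + G (bits (\<sigma> x)) + tr n (a * \<sigma> x) = (f x + G (bits x) + tr n (a * x)) + 1"
      using L_w[OF i(1)[OF \<open>x \<in> A\<close>]]
      by (simp add: \<sigma>_def polar distrib_left tr_add[OF CHAR_eq_2] mult.commute add_ac)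
    then have "T (\<sigma> x) = - T x"
      unfolding T_def
      using chi_add[OF CHAR_eq_2 F2_add_closed[OF CHAR_eq_2 F2_add_closed[OF CHAR_eq_2 f_F2 G_F2] tr_n_in_F2],
          where z=1]
      by (simp add: chi_def)
    then show "T (\<sigma> x) + T x = 0" and "\<sigma> x \<noteq> x"
      by (auto simp: T_def chi_def split: if_splits)
  qed (use \<sigma>_A \<sigma>_\<sigma> in auto)
  then show ?thesis
    by (simp add: A_def T_def bits_def)
qed

lemma walsh_add_function_of_linear_forms_eq_sum_pattern:
  fixes f L :: "'a \<Rightarrow> 'a" and v w :: "nat \<Rightarrow> 'a" and G :: "(nat \<Rightarrow> bool) \<Rightarrow> 'a" and a :: 'a
  assumes f_F2: "\<And>x. f x \<in> {0, 1}"
    and polar: "\<And>x z. f (x + z) = f x + f z + tr n (L z * x)"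
    and L_w: "\<And>i. i < \<tau> \<Longrightarrow> L (w i) = v i"
    and orth: "\<And>i j. i < \<tau> \<Longrightarrow> j < \<tau> \<Longrightarrow> tr n (v j * w i) = 0"
    and G_F2: "\<And>b. G b \<in> {0, 1}"
    and G_cong: "\<And>b b'. (\<And>j. j < \<tau> \<Longrightarrow> b j = b' j) \<Longrightarrow> G b = G b'"
  defines "\<beta> j \<equiv> f (w j) + tr n (a * w j) \<noteq> 0"
  shows "walsh n (\<lambda>x. f x + G (\<lambda>j. tr n (v j * x) \<noteq> 0)) a
    = (\<Sum>x\<in>{x. \<forall>j<\<tau>. (tr n (v j * x) \<noteq> 0) = \<beta> j}. chi (G \<beta> + (f x + tr n (a * x))))"
proof -
  let ?A = "{x. \<exists>j<\<tau>. (tr n (v j * x) \<noteq> 0) \<noteq> \<beta> j}"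
  let ?B = "{x. \<forall>j<\<tau>. (tr n (v j * x) \<noteq> 0) = \<beta> j}"
  define T where "T x = chi (f x + G (\<lambda>j. tr n (v j * x) \<noteq> 0) + tr n (a * x))" for x
  have "walsh n (\<lambda>x. f x + G (\<lambda>j. tr n (v j * x) \<noteq> 0)) a = (\<Sum>x\<in>UNIV - ?A. T x) + (\<Sum>x\<in>?A. T x)"
    unfolding walsh_eq_sum_chi T_def by (rule sum.subset_diff) auto
  also have "(\<Sum>x\<in>?A. T x) = 0"
    unfolding T_def \<beta>_def by (rule sum_chi_off_pattern_eq_0[OF f_F2 polar L_w orth G_F2 G_cong])
  also have "UNIV - ?A = ?B"
    by auto
  also have "(\<Sum>x\<in>?B. T x) = (\<Sum>x\<in>?B. chi (G \<beta> + (f x + tr n (a * x))))"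
  proof (rule sum.cong[OF refl])
    fix x
    assume "x \<in> ?B"
    then have "G (\<lambda>j. tr n (v j * x) \<noteq> 0) = G \<beta>"
      by (intro G_cong) auto
    then show "T x = chi (G \<beta> + (f x + tr n (a * x)))"
      by (simp add: T_def add_ac)
  qed
  finally show ?thesis
    by simp
qed

lemma walsh_add_function_of_linear_forms:
  fixes f L :: "'a \<Rightarrow> 'a" and v w :: "nat \<Rightarrow> 'a" and G :: "(nat \<Rightarrow> bool) \<Rightarrow> 'a" and a :: 'a
  assumes f_F2: "\<And>x. f x \<in> {0, 1}"
    and polar: "\<And>x z. f (x + z) = f x + f z + tr n (L z * x)"
    and L_w: "\<And>i. i < \<tau> \<Longrightarrow> L (w i) = v i"
    and orth: "\<And>i j. i < \<tau> \<Longrightarrow> j < \<tau> \<Longrightarrow> tr n (v j * w i) = 0"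
    and G_F2: "\<And>b. G b \<in> {0, 1}"
    and G_cong: "\<And>b b'. (\<And>j. j < \<tau> \<Longrightarrow> b j = b' j) \<Longrightarrow> G b = G b'"
  defines "\<beta> j \<equiv> f (w j) + tr n (a * w j) \<noteq> 0"
  shows "walsh n (\<lambda>x. f x + G (\<lambda>j. tr n (v j * x) \<noteq> 0)) a = chi (G \<beta>) * walsh n f a"
proof -
  let ?B = "{x. \<forall>j<\<tau>. (tr n (v j * x) \<noteq> 0) = \<beta> j}"
  have "walsh n (\<lambda>x. f x + G (\<lambda>j. tr n (v j * x) \<noteq> 0)) a = (\<Sum>x\<in>?B. chi (G \<beta> + (f x + tr n (a * x))))"
    unfolding \<beta>_def by (rule walsh_add_function_of_linear_forms_eq_sum_pattern[OF f_F2 polar L_w orth G_F2 G_cong])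
  also have "\<dots> = chi (G \<beta>) * (\<Sum>x\<in>?B. chi (0 + (f x + tr n (a * x))))"
    using chi_add[OF CHAR_eq_2 G_F2 F2_add_closed[OF CHAR_eq_2 f_F2 tr_n_in_F2]]
    by (simp add: sum_distrib_left)
  also have "(\<Sum>x\<in>?B. chi (0 + (f x + tr n (a * x)))) = walsh n f a"
    using walsh_add_function_of_linear_forms_eq_sum_pattern[OF f_F2 polar L_w orth, where G="\<lambda>_. 0"]
    by (simp add: \<beta>_def)
  finally show ?thesis .
qed

lemma tr_mult_nondegenerate:
  assumes "\<And>y. tr n (u * y) = (0::'a)"
  shows "u = 0"
proof (rule ccontr)
  assume "u \<noteq> 0"
  obtain x :: 'a where "tr n x \<noteq> 0"
    using tr_not_identically_0 by blast
  with assms[of "x / u"] \<open>u \<noteq> 0\<close> show False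
    by simp
qed

lemma tr_mult_add_F2_combination:
  assumes "\<And>i. c i \<in> {0, 1}"
  shows "tr n (a * (y + (\<Sum>i\<in>I. c i * b i))) = tr n (a * y) + (\<Sum>i\<in>I. c i * tr n (a * b i :: 'a))"
  using assms
  by (simp add: distrib_left sum_distrib_left tr_add[OF CHAR_eq_2]
      tr_sum[OF CHAR_eq_2] mult.left_commute[of a] tr_mult_F2)

lemma exists_direction_dual_to_next:
  fixes v d :: "nat \<Rightarrow> 'a"
  assumes indep: "F2_lin_indep v \<tau>" and "t < \<tau>"
    and d: "\<And>m i. m < t \<Longrightarrow> i < t \<Longrightarrow> tr n (v i * d m) = (if i = m then 1 else 0)"
  shows "\<exists>y. (\<forall>i<t. tr n (v i * y) = 0) \<and> tr n (v t * y) = 1"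
proof (rule ccontr)
  assume "\<not> ?thesis"
  then have no_y: "tr n (v t * y) = 0" if "\<And>i. i < t \<Longrightarrow> tr n (v i * y) = 0" for y
    using that tr_n_in_F2[of "v t * y"] by blast
  define coef where "coef i = tr n (v t * d i)" for i
  have "tr n ((v t + (\<Sum>i<t. coef i * v i)) * y) = 0" for y
  proof -
    define c where "c i = tr n (v i * y)" for i
    define y' where "y' = y + (\<Sum>i<t. c i * d i)"
    have "(\<Sum>i<t. c i * tr n (v j * d i)) = c j" if "j < t" for j
    proof -
      have "(\<Sum>i<t. c i * tr n (v j * d i)) = (\<Sum>i<t. if i = j then c i else 0)"
        using d that by (intro sum.cong) auto
      with that show ?thesis
        by simp
    qed
    moreover have "tr n (v j * y') = tr n (v j * y) + (\<Sum>i<t. c i * tr n (v j * d i))" for j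
      unfolding y'_def by (rule tr_mult_add_F2_combination) (unfold c_def, rule tr_n_in_F2)
    ultimately have "tr n (v j * y') = 0" if "j < t" for j
      using that add_self_CHAR_2[OF CHAR_eq_2] by (simp add: c_def)
    then have "tr n (v t * y') = 0"
      by (rule no_y)
    moreover have "tr n (v t * y') = tr n (v t * y) + (\<Sum>i<t. c i * coef i)"
      unfolding y'_def coef_def by (rule tr_mult_add_F2_combination) (unfold c_def, rule tr_n_in_F2)
    moreover have "tr n (y * (v t + (\<Sum>i<t. coef i * v i))) = tr n (y * v t) + (\<Sum>i<t. coef i * tr n (y * v i))"
      by (rule tr_mult_add_F2_combination) (unfold coef_def, rule tr_n_in_F2)
    ultimately show ?thesis
      by (simp add: c_def mult.commute)
  qed
  then have "v t + (\<Sum>i<t. coef i * v i) = 0"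
    by (rule tr_mult_nondegenerate)
  moreover have "(\<Sum>i<t. coef i * v i) = (\<Sum>i\<in>{i. i < t \<and> coef i = 1}. v i)"
    using tr_n_in_F2 by (intro sum.mono_neutral_cong_right) (auto simp: coef_def)
  ultimately have "(\<Sum>i\<in>insert t {i. i < t \<and> coef i = 1}. v i) = (\<Sum>i\<in>{}. v i)"
    by simp
  moreover have "insert t {i. i < t \<and> coef i = 1} \<in> Pow {..<\<tau>}"
    using \<open>t < \<tau>\<close> by auto
  ultimately show False
    using indep unfolding F2_lin_indep_def by (metis Pow_bottom empty_not_insert inj_onD)
qed

lemma exists_dual_directions:
  fixes v :: "nat \<Rightarrow> 'a"
  assumes indep: "F2_lin_indep v \<tau>"
  shows "\<exists>d. \<forall>m<\<tau>. \<forall>i<\<tau>. tr n (v i * d m) = (if i = m then 1 else 0)"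
proof -
  have "t \<le> \<tau> \<Longrightarrow> \<exists>d. \<forall>m<t. \<forall>i<t. tr n (v i * d m) = (if i = m then 1 else 0)" for t
  proof (induction t)
    case (Suc t)
    then obtain d where d: "\<And>m i. m < t \<Longrightarrow> i < t \<Longrightarrow> tr n (v i * d m) = (if i = m then 1 else 0)"
      by auto
    have "t < \<tau>"
      using Suc.prems by simp
    then obtain y where y: "\<And>i. i < t \<Longrightarrow> tr n (v i * y) = 0" and "tr n (v t * y) = 1"
      using exists_direction_dual_to_next[OF indep _ d] by auto
    define d' where "d' m = (if m = t then y else d m + tr n (v t * d m) * y)" for m
    have "tr n (v i * d' m) = (if i = m then 1 else 0)" if "m < Suc t" "i < Suc t" for m i
    proof (cases "m = t")
      case False
      then have "tr n (v i * d' m) = tr n (v i * d m) + tr n (v t * d m) * tr n (v i * y)"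
        using tr_mult_F2[OF tr_n_in_F2[of "v t * d m"], of n "v i * y"]
        by (simp add: d'_def distrib_left tr_add[OF CHAR_eq_2] mult.left_commute[of "v i"])
      with False that show ?thesis
        using d y \<open>tr n (v t * y) = 1\<close> add_self_CHAR_2[OF CHAR_eq_2] by (cases "i = t") auto
    qed (use that y \<open>tr n (v t * y) = 1\<close> in \<open>auto simp: d'_def\<close>)
    then show ?case
      by blast
  qed simp
  then show ?thesis
    by blast
qed

context
  fixes v :: "nat \<Rightarrow> 'a" and \<tau> :: nat and S :: "nat set set"
  assumes S: "reduced_poly \<tau> S"
begin

lemma of_bool_poly_eval_tr:
  "(of_bool (poly_eval S (\<lambda>j. tr n (v j * y) \<noteq> 0)) :: 'a) = (\<Sum>M\<in>S. \<Prod>i\<in>M. tr n (v i * y))"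
proof -
  have "(of_bool (tr n (v i * y) \<noteq> 0) :: 'a) = tr n (v i * y)" for i
    using tr_n_in_F2[of "v i * y"] by auto
  then show ?thesis
    using of_bool_poly_eval[OF CHAR_eq_2] reduced_poly_finite[OF S] by simp
qed

lemma diff_along_poly_eval_tr_eq_0:
  assumes "poly_degree S < length as"
  shows "diff_along as (\<lambda>y. of_bool (poly_eval S (\<lambda>j. tr n (v j * y) \<noteq> 0)) :: 'a) x = 0"
proof -
  have "card M < length as" if "M \<in> S" for M
    using assms that reduced_poly_finite[OF S] unfolding poly_degree_def by (simp add: le_less_trans)
  then show ?thesis
    unfolding of_bool_poly_eval_tr
    using reduced_poly_finite[OF S]
    by (simp add: diff_along_sum diff_along_prod_additive_eq_0[OF CHAR_eq_2]
        distrib_left tr_add[OF CHAR_eq_2])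
qed

lemma exists_diff_along_poly_eval_tr_eq_1:
  assumes "F2_lin_indep v \<tau>" and "M \<in> S"
  shows "\<exists>as. length as = card M \<and> diff_along as (\<lambda>y. of_bool (poly_eval S (\<lambda>j. tr n (v j * y) \<noteq> 0)) :: 'a) 0 = 1"
proof -
  obtain d where d: "\<And>m i. m < \<tau> \<Longrightarrow> i < \<tau> \<Longrightarrow> tr n (v i * d m) = (if i = m then 1 else 0)"
    using exists_dual_directions[OF assms(1)] by blast
  let ?ms = "sorted_list_of_set M"
  have "diff_along (map d ?ms) (\<lambda>y. \<Sum>M\<in>S. \<Prod>i\<in>M. tr n (v i * y)) 0 = (if set ?ms \<in> S then 1 else 0)"
  proof (rule diff_along_sum_prod_additive_dual[OF CHAR_eq_2])
    fix m M' i
    assume "m \<in> set ?ms" "M' \<in> S" "i \<in> M'"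
    then have "m < \<tau>" and "i < \<tau>"
      using reduced_poly_finite[OF S] assms(2) by auto
    then show "tr n (v i * d m) = (if i = m then 1 else 0)"
      by (rule d)
  qed (use reduced_poly_finite[OF S] in \<open>auto simp: distrib_left tr_add[OF CHAR_eq_2]\<close>)
  then show ?thesis
    using reduced_poly_finite(2)[OF S assms(2)] assms(2)
    by (intro exI[of _ "map d ?ms"]) (simp add: of_bool_poly_eval_tr)
qed

end

end

section \<open>The field of order \<open>2 ^ (2 * k)\<close> and its subfield \<open>subF k\<close>\<close>

lemma card_range_mult_card_kernel:
  fixes T :: "'a::{ab_group_add,finite} \<Rightarrow> 'b::ab_group_add"
  assumes T_add: "\<And>x y. T (x + y) = T x + T y"
  shows "card (range T) * card {x. T x = 0} = card (UNIV :: 'a set)"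
proof -
  have fiber: "{x. T x = z} = (\<lambda>x. x + x0) ` {x. T x = 0}" if "T x0 = z" for z x0
  proof -
    have "T (x - x0) = T x - T x0" for x
      using T_add[of "x - x0" x0] by (simp add: algebra_simps)
    then have "x \<in> (\<lambda>x. x + x0) ` {x. T x = 0}" if "T x = z" for x
      using \<open>T x0 = z\<close> that by (auto simp: image_iff intro!: exI[of _ "x - x0"])
    then show ?thesis
      using that T_add by auto
  qed
  have same_card: "card {x. T x = z} = card {x. T x = 0}" if "z \<in> range T" for z
    using that fiber by (auto simp: card_image)
  have "card (UNIV :: 'a set) = card (\<Union>z\<in>range T. {x. T x = z})"
    by (rule arg_cong[where f=card]) auto
  also have "\<dots> = (\<Sum>z\<in>range T. card {x. T x = z})"
    by (rule card_UN_disjoint) auto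
  also have "\<dots> = card (range T) * card {x. T x = 0}"
    using same_card by simp
  finally show ?thesis
    by simp
qed

context
  fixes k :: nat
  assumes card_UNIV_2k: "card (UNIV :: 'a::{field,finite} set) = 2 ^ (2 * k)"
begin

lemmas CHAR_2k = CHAR_eq_2[OF card_UNIV_2k]

lemma conj_conj [simp]: "((x::'a) ^ 2 ^ k) ^ 2 ^ k = x"
  using power_2_power_n[OF card_UNIV_2k, of x]
  by (simp add: power_mult[symmetric] power_add[symmetric] mult_2)

lemma subF_0: "(0::'a) \<in> subF k" and subF_1: "(1::'a) \<in> subF k"
  by (simp_all add: subF_def power_0_left)

lemma subF_add: "y \<in> subF k \<Longrightarrow> z \<in> subF k \<Longrightarrow> (y + z :: 'a) \<in> subF k"
  by (simp add: subF_def power_2_power_add_CHAR_2[OF CHAR_2k])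

lemma subF_mult: "y \<in> subF k \<Longrightarrow> z \<in> subF k \<Longrightarrow> (y * z :: 'a) \<in> subF k"
  by (simp add: subF_def power_mult_distrib)

lemma subF_inverse: "y \<in> subF k \<Longrightarrow> inverse (y::'a) \<in> subF k"
  by (simp add: subF_def power_inverse)

lemma norm_in_subF: "(x::'a) ^ (2 ^ k + 1) \<in> subF k"
  by (simp add: subF_def power_mult_distrib power_add mult.commute)

lemma conj_mult_in_subF_commute: "(x::'a) ^ 2 ^ k * y \<in> subF k \<Longrightarrow> y ^ 2 ^ k * x \<in> subF k"
  by (simp add: subF_def power_mult_distrib mult.commute)

lemma conj_mult_in_subF_if_ordered:
  fixes u :: "nat \<Rightarrow> 'a" and i j m :: nat
  assumes "\<And>i j. i < j \<Longrightarrow> j < m \<Longrightarrow> u i * u j ^ 2 ^ k \<in> subF k" and "i < m" and "j < m"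
  shows "u i ^ 2 ^ k * u j \<in> subF k"
proof (cases i j rule: linorder_cases)
  case less
  then show ?thesis
    using assms(1)[OF less \<open>j < m\<close>] conj_mult_in_subF_commute by (simp add: mult.commute)
next
  case equal
  then show ?thesis
    using norm_in_subF[of "u j"] by (simp add: power_add mult.commute)
next
  case greater
  then show ?thesis
    using assms(1)[OF greater \<open>i < m\<close>] by (simp add: mult.commute)
qed

lemma tr_2k_eq: "tr (2 * k) (y::'a) = tr k y + tr k (y ^ 2 ^ k)"
  using tr_add_length[of k k y] by (simp add: mult_2)

lemma tr_2k_subF: "y \<in> subF k \<Longrightarrow> tr (2 * k) (y::'a) = 0"
  by (simp add: tr_2k_eq subF_def add_self_CHAR_2[OF CHAR_2k])

lemma tr_k_subF_in_F2: "y \<in> subF k \<Longrightarrow> tr k (y::'a) \<in> {0, 1}"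
  by (rule tr_in_F2[OF CHAR_2k]) (simp add: subF_def)

lemma norm_add:
  "(x + z :: 'a) ^ (2 ^ k + 1) = x ^ (2 ^ k + 1) + z ^ (2 ^ k + 1) + (x ^ 2 ^ k * z + x * z ^ 2 ^ k)"
  by (simp add: power_add power_2_power_add_CHAR_2[OF CHAR_2k] algebra_simps)

lemma tr_k_norm_polar:
  fixes c :: 'a
  assumes "c \<in> subF k"
  shows "tr k (c * (x + z :: 'a) ^ (2 ^ k + 1))
    = tr k (c * x ^ (2 ^ k + 1)) + tr k (c * z ^ (2 ^ k + 1)) + tr (2 * k) (c * z ^ 2 ^ k * x)"
proof -
  have "(c * z ^ 2 ^ k * x) ^ 2 ^ k = c * x ^ 2 ^ k * z"
    using assms by (simp add: subF_def power_mult_distrib mult_ac)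
  then have "tr (2 * k) (c * z ^ 2 ^ k * x) = tr k (c * z ^ 2 ^ k * x) + tr k (c * x ^ 2 ^ k * z)"
    by (simp add: tr_2k_eq)
  moreover have "c * (x + z) ^ (2 ^ k + 1)
      = c * x ^ (2 ^ k + 1) + c * z ^ (2 ^ k + 1) + (c * z ^ 2 ^ k * x + c * x ^ 2 ^ k * z)"
    unfolding norm_add by (simp add: algebra_simps)
  ultimately show ?thesis
    by (simp only: tr_add[OF CHAR_2k])
qed

lemma walsh_tr_k_norm_abs:
  fixes c :: 'a
  assumes "c \<in> subF k" and "c \<noteq> 0"
  shows "\<bar>walsh (2 * k) (\<lambda>x. tr k (c * x ^ (2 ^ k + 1))) a\<bar> = 2 ^ k"
proof -
  have "walsh (2 * k) (\<lambda>x. tr k (c * x ^ (2 ^ k + 1))) a ^ 2 = (2 ^ k) ^ 2"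
    using walsh_square_if_polar_nondegenerate[OF card_UNIV_2k, where L="\<lambda>z. c * z ^ 2 ^ k"]
      tr_k_subF_in_F2[OF subF_mult[OF assms(1) norm_in_subF]] tr_k_norm_polar[OF assms(1)] assms(2)
    by (simp add: power_mult[symmetric] mult.commute)
  then have "\<bar>walsh (2 * k) (\<lambda>x. tr k (c * x ^ (2 ^ k + 1))) a\<bar> ^ 2 = (2 ^ k) ^ 2"
    by simp
  then show ?thesis
    by (rule power2_eq_imp_eq) simp_all
qed

lemma vectorial_bent_norm_plus_function_of_linear_forms:
  fixes v :: "nat \<Rightarrow> 'a" and F :: "(nat \<Rightarrow> bool) \<Rightarrow> bool"
  assumes v: "\<And>i j. i < \<tau> \<Longrightarrow> j < \<tau> \<Longrightarrow> v i ^ 2 ^ k * v j \<in> subF k"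
    and F_cong: "\<And>b b'. (\<And>j. j < \<tau> \<Longrightarrow> b j = b' j) \<Longrightarrow> F b = F b'"
  shows "vectorial_bent (2 * k) k
    (\<lambda>x. x ^ (2 ^ k + 1) + of_bool (F (\<lambda>j. tr (2 * k) (v j * x) \<noteq> 0)))"
  unfolding vectorial_bent_def
proof (intro conjI allI ballI)
  fix x :: 'a
  show "x ^ (2 ^ k + 1) + of_bool (F (\<lambda>j. tr (2 * k) (v j * x) \<noteq> 0)) \<in> subF k"
    by (intro subF_add norm_in_subF) (simp add: of_bool_def subF_0 subF_1)
next
  fix c :: 'a
  assume c: "c \<in> subF k - {0}"
  define G where "G b = (if F b then tr k c else 0)" for b
  define w where "w i = (v i / c) ^ 2 ^ k" for i
  have component: "tr k (c * (x ^ (2 ^ k + 1) + of_bool (F b)))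
      = tr k (c * x ^ (2 ^ k + 1)) + G b" for x b
    by (simp add: G_def distrib_left tr_add[OF CHAR_2k])
  have G_F2: "G b \<in> {0, 1}" for b
    using tr_k_subF_in_F2[of c] c by (simp add: G_def)
  have G_cong: "G b = G b'" if "\<And>j. j < \<tau> \<Longrightarrow> b j = b' j" for b b'
    using F_cong[OF that] by (simp add: G_def)
  have L_w: "c * w i ^ 2 ^ k = v i" for i
    using c by (simp add: w_def)
  have orth: "tr (2 * k) (v j * w i) = 0" if "i < \<tau>" "j < \<tau>" for i j
  proof (rule tr_2k_subF)
    have "v j * w i = (v i ^ 2 ^ k * v j) * inverse c"
      using c by (simp add: w_def power_divide subF_def field_simps)
    also have "\<dots> \<in> subF k"
      using subF_mult[OF v[OF that] subF_inverse[of c]] c by simp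
    finally show "v j * w i \<in> subF k" .
  qed
  have "\<bar>walsh (2 * k) (\<lambda>x. tr k (c * x ^ (2 ^ k + 1)) + G (\<lambda>j. tr (2 * k) (v j * x) \<noteq> 0)) a\<bar>
      = 2 ^ k" for a
    using walsh_add_function_of_linear_forms[where f="\<lambda>x. tr k (c * x ^ (2 ^ k + 1))"
        and L="\<lambda>z. c * z ^ 2 ^ k" and v=v and w=w and G=G and \<tau>=\<tau>, OF card_UNIV_2k
        tr_k_subF_in_F2[OF subF_mult[OF _ norm_in_subF]] tr_k_norm_polar L_w orth G_F2 G_cong]
      walsh_tr_k_norm_abs c
    by (simp add: abs_mult)
  then show "bent (2 * k) (\<lambda>x. tr k (c * (x ^ (2 ^ k + 1)
      + of_bool (F (\<lambda>j. tr (2 * k) (v j * x) \<noteq> 0)))))"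
    unfolding bent_def component by (simp add: powr_realpow flip: of_int_abs)
qed

context
  fixes w :: "nat \<Rightarrow> 'a"
  assumes basis_subF: "F2_basis w k (subF k)"
begin

lemma add_conj_surj_subF:
  assumes "y \<in> subF k"
  shows "\<exists>a::'a. a + a ^ 2 ^ k = y"
proof -
  define T where "T a = a + a ^ 2 ^ k" for a :: 'a
  have T_add: "T (a + b) = T a + T b" for a b
    by (simp add: T_def power_2_power_add_CHAR_2[OF CHAR_2k] add_ac)
  have "{a. T a = 0} = subF k"
    by (auto simp: T_def subF_def add_eq_0_iff uminus_CHAR_2[OF CHAR_2k])
  then have "card (range T) * 2 ^ k = 2 ^ k * 2 ^ k"
    using card_range_mult_card_kernel[OF T_add] card_UNIV_2k card_basis_span[OF CHAR_2k basis_subF]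
    by (simp add: power_add[symmetric] mult_2)
  then have "card (range T) = card (subF k :: 'a set)"
    using card_basis_span[OF CHAR_2k basis_subF] by simp
  moreover have "range T \<subseteq> subF k"
    by (auto simp: T_def subF_def power_2_power_add_CHAR_2[OF CHAR_2k] conj_conj add.commute)
  ultimately have "range T = subF k"
    by (intro card_subset_eq) auto
  with assms obtain a where "y = T a"
    by blast
  then show ?thesis
    by (auto simp: T_def)
qed

lemma coord_subF_add_of_bool:
  "x \<in> subF k \<Longrightarrow> coord w k j (x + of_bool b) = coord w k j x + coord w k j 1 * of_bool b"
  using coord_add[OF CHAR_2k basis_subF] subF_add subF_1
    coord_0[OF CHAR_2k basis_subF]
  by (cases b) auto

lemma diff_along_coord_norm:
  "diff_along (a # b # as) (\<lambda>y. coord w k j (y ^ (2 ^ k + 1))) x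
    = diff_along as (\<lambda>y. coord w k j (b ^ 2 ^ k * a + b * a ^ 2 ^ k)) x"
proof -
  define Q where "Q y = y ^ 2 ^ k * a + y * a ^ 2 ^ k" for y :: 'a
  let ?\<pi> = "coord w k j"
  have \<pi>_add: "?\<pi> (x + y) = ?\<pi> x + ?\<pi> y" if "x \<in> subF k" "y \<in> subF k" for x y
    using coord_add[OF CHAR_2k basis_subF that subF_add[OF that]] .
  have Q_subF: "Q y \<in> subF k" for y
    by (simp add: Q_def subF_def power_2_power_add_CHAR_2[OF CHAR_2k] power_mult_distrib
        conj_conj add.commute mult.commute)
  have Q_add: "Q (y + b) = Q y + Q b" for y
    by (simp add: Q_def power_2_power_add_CHAR_2[OF CHAR_2k] algebra_simps)
  have "?\<pi> ((y + a) ^ (2 ^ k + 1)) + ?\<pi> (y ^ (2 ^ k + 1)) = ?\<pi> (a ^ (2 ^ k + 1)) + ?\<pi> (Q y)" for y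
  proof -
    have "(y + a) ^ (2 ^ k + 1) = (y ^ (2 ^ k + 1) + a ^ (2 ^ k + 1)) + Q y"
      unfolding Q_def by (rule norm_add)
    then show ?thesis
      using \<pi>_add norm_in_subF Q_subF subF_add
        add_self_CHAR_2[OF CHAR_2k, of "?\<pi> (y ^ (2 ^ k + 1))"]
      by (simp add: add_ac)
  qed
  moreover have "?\<pi> (a ^ (2 ^ k + 1)) + ?\<pi> (Q (y + b)) + (?\<pi> (a ^ (2 ^ k + 1)) + ?\<pi> (Q y)) = ?\<pi> (Q b)" for y
  proof -
    have "?\<pi> (Q (y + b)) = ?\<pi> (Q y) + ?\<pi> (Q b)"
      unfolding Q_add by (rule \<pi>_add[OF Q_subF Q_subF])
    then show ?thesis
      by (simp add: add_ac two_eq_0_CHAR_2[OF CHAR_2k] flip: mult_2)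
  qed
  ultimately show ?thesis
    by (simp add: Q_def mult.commute)
qed

lemma diff_along_coord_norm_eq_0:
  assumes "3 \<le> length as"
  shows "diff_along as (\<lambda>y. coord w k j (y ^ (2 ^ k + 1))) x = 0"
proof -
  obtain a b c rest where "as = a # b # c # rest"
    using assms by (metis Suc_le_length_iff numeral_3_eq_3)
  then show ?thesis
    by (simp only: diff_along_coord_norm) (rule diff_along_const[OF CHAR_2k], simp)
qed

lemma diff_along_coord_bool_norm_plus_of_bool:
  "diff_along as (\<lambda>y. of_bool (coord_bool w k (\<lambda>y. y ^ (2 ^ k + 1) + of_bool (P y)) j y)) x
    = diff_along as (\<lambda>y. coord w k j (y ^ (2 ^ k + 1))) x + coord w k j 1 * diff_along as (\<lambda>y. of_bool (P y)) x"
proof -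
  have "(\<lambda>y. of_bool (coord_bool w k (\<lambda>y. y ^ (2 ^ k + 1) + of_bool (P y)) j y) :: 'a)
      = (\<lambda>y. coord w k j (y ^ (2 ^ k + 1)) + coord w k j 1 * of_bool (P y))"
    using coord_subF_add_of_bool[OF norm_in_subF]
    by (simp add: coord_def coord_bool_def)
  then show ?thesis
    by (simp add: diff_along_add diff_along_mult_left)
qed

context
  fixes e :: "nat \<Rightarrow> 'a" and P :: "'a \<Rightarrow> bool"
  assumes basis_UNIV: "F2_basis e (2 * k) UNIV"
begin

abbreviation H_coord :: "nat \<Rightarrow> 'a \<Rightarrow> bool" where
  "H_coord \<equiv> coord_bool w k (\<lambda>y. y ^ (2 ^ k + 1) + of_bool (P y))"

lemma coord_bool_norm_plus_of_bool_degree_le: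
  assumes "2 \<le> d" and "\<And>as x. d < length as \<Longrightarrow> diff_along as (\<lambda>y. of_bool (P y) :: 'a) x = 0"
  shows "bool_alg_degree e (2 * k) (H_coord j) \<le> d"
  unfolding bool_alg_degree_le_iff[OF CHAR_2k basis_UNIV]
proof (intro allI impI)
  fix as :: "'a list" and x :: 'a
  assume "d < length as"
  then show "diff_along as (\<lambda>y. of_bool (H_coord j y) :: 'a) x = 0"
    unfolding diff_along_coord_bool_norm_plus_of_bool
    using assms diff_along_coord_norm_eq_0[of as] by simp
qed

lemma exists_coord_bool_norm_plus_of_bool_degree_ge:
  assumes "3 \<le> length as" and "diff_along as (\<lambda>y. of_bool (P y) :: 'a) 0 = 1"
  shows "\<exists>j<k. length as \<le> bool_alg_degree e (2 * k) (H_coord j)"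
proof -
  have "(1::'a) \<in> subF k"
    by (rule subF_1)
  then obtain j where j: "j \<in> coords w k 1"
    using coords_basis_expansion[OF CHAR_2k basis_subF] by fastforce
  then have "j < k"
    using coords_basis_expansion[OF CHAR_2k basis_subF \<open>1 \<in> subF k\<close>] by auto
  moreover have "diff_along as (\<lambda>y. of_bool (H_coord j y) :: 'a) 0 = 1"
    unfolding diff_along_coord_bool_norm_plus_of_bool
    using assms j diff_along_coord_norm_eq_0[of as] by (simp add: coord_def)
  ultimately show ?thesis
    using bool_alg_degree_ge_if_diff_along_neq_0[OF CHAR_2k basis_UNIV, of as _ 0] by auto
qed

lemma exists_coord_bool_norm_plus_of_bool_degree_ge_2:
  assumes "2 \<le> k"
  shows "\<exists>j<k. 2 \<le> bool_alg_degree e (2 * k) (H_coord j)"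
proof -
  have coord_w: "coord w k i (w j) = of_bool (i = j)" if "j < k" for i j
    using that coords_sum_basis[OF CHAR_2k basis_subF, of "{j}"] by (auto simp: coord_def)
  have "\<forall>j. \<exists>b. j < k \<longrightarrow> b + b ^ 2 ^ k = w j"
    using add_conj_surj_subF[OF basis_mem[OF CHAR_2k basis_subF]] by blast
  from choice[OF this] obtain a where a: "\<forall>j. j < k \<longrightarrow> a j + a j ^ 2 ^ k = w j"
    by blast
  define D where "D j = diff_along [a j, 1] (\<lambda>y. of_bool (P y) :: 'a) 0" for j
  have diff2: "diff_along [a j, 1] (\<lambda>y. of_bool (H_coord i y) :: 'a) 0
      = of_bool (i = j) + coord w k i 1 * D j" if "i < k" "j < k" for i j
    unfolding diff_along_coord_bool_norm_plus_of_bool diff_along_coord_norm D_def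
    using that a coord_w by simp
  have degree_ge: "\<exists>i<k. 2 \<le> bool_alg_degree e (2 * k) (H_coord i)"
    if "i < k" "j < k" "of_bool (i = j) + coord w k i 1 * D j \<noteq> 0" for i j
  proof -
    have "diff_along [a j, 1] (\<lambda>y. of_bool (H_coord i y) :: 'a) 0 \<noteq> 0"
      using diff2[OF that(1,2)] that(3) by simp
    then have "length [a j, 1] \<le> bool_alg_degree e (2 * k) (H_coord i)"
      by (rule bool_alg_degree_ge_if_diff_along_neq_0[OF CHAR_2k basis_UNIV])
    with that(1) show ?thesis
      by auto
  qed
  text \<open>Whatever the values \<open>D j\<close>, one of the second derivatives \<open>diff2\<close> with \<open>i, j \<in> {0, 1}\<close>
    is nonzero.\<close>
  consider "coord w k 0 1 = 0" | "coord w k 1 1 = 0" | "coord w k 0 1 = 1" "coord w k 1 1 = 1"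
    by (auto simp: coord_def)
  then show ?thesis
  proof cases
    case 1
    then show ?thesis
      using degree_ge[of 0 0] assms by simp
  next
    case 2
    then show ?thesis
      using degree_ge[of 1 1] assms by simp
  next
    case 3
    then show ?thesis
      using degree_ge[of 0 0] degree_ge[of 1 0] assms by (cases "D 0 = 0") simp_all
  qed
qed

end

end

end

section \<open>Algebraic degree\<close>

lemma vec_alg_degree_norm_plus_poly_eval:
  fixes v e w :: "nat \<Rightarrow> 'a::{field,finite}"
  assumes card_UNIV_2k: "card (UNIV :: 'a set) = 2 ^ (2 * k)"
    and S: "reduced_poly \<tau> S" and indep: "F2_lin_indep v \<tau>" and deg: "2 \<le> poly_degree S"
    and "\<tau> \<le> k" and basis_UNIV: "F2_basis e (2 * k) UNIV" and basis_subF: "F2_basis w k (subF k)"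
  shows "vec_alg_degree e (2 * k) w k
    (\<lambda>y. y ^ (2 ^ k + 1) + of_bool (poly_eval S (\<lambda>j. tr (2 * k) (v j * y) \<noteq> 0))) = poly_degree S"
proof -
  define d where "d = poly_degree S"
  define P where "P y \<longleftrightarrow> poly_eval S (\<lambda>j. tr (2 * k) (v j * y) \<noteq> 0)" for y
  define D where "D j = bool_alg_degree e (2 * k) (coord_bool w k (\<lambda>y. y ^ (2 ^ k + 1) + of_bool (P y)) j)" for j
  have upper: "D j \<le> d" for j
    unfolding D_def P_def d_def
    by (rule coord_bool_norm_plus_of_bool_degree_le[OF card_UNIV_2k basis_subF basis_UNIV deg])
      (rule diff_along_poly_eval_tr_eq_0[OF card_UNIV_2k S])
  have "d \<in> insert 0 (card ` S)"
    unfolding d_def poly_degree_def using reduced_poly_finite[OF S]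
    by (intro Max_in) auto
  with deg obtain M where M: "M \<in> S" "card M = d"
    by (auto simp: d_def)
  have lower: "\<exists>j<k. d \<le> D j"
  proof (cases "3 \<le> d")
    case True
    obtain as where "length as = d" and "diff_along as (\<lambda>y. of_bool (P y) :: 'a) 0 = 1"
      using exists_diff_along_poly_eval_tr_eq_1[OF card_UNIV_2k S indep M(1)] M(2)
      by (auto simp: P_def)
    then show ?thesis
      using exists_coord_bool_norm_plus_of_bool_degree_ge[OF card_UNIV_2k basis_subF basis_UNIV]
        True by (auto simp: D_def)
  next
    case False
    then have "d = 2"
      using deg by (simp add: d_def)
    moreover have "card M \<le> card {..<\<tau>}"
      using reduced_poly_finite[OF S] M(1) by (intro card_mono) auto
    ultimately have "2 \<le> k"
      using M(2) \<open>\<tau> \<le> k\<close> by simp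
    then show ?thesis
      using exists_coord_bool_norm_plus_of_bool_degree_ge_2[OF card_UNIV_2k basis_subF basis_UNIV]
        \<open>d = 2\<close> by (auto simp: D_def)
  qed
  have "vec_alg_degree e (2 * k) w k (\<lambda>y. y ^ (2 ^ k + 1) + of_bool (P y)) = Max (insert 0 (D ` {..<k}))"
    unfolding vec_alg_degree_def D_def coord_bool_def ..
  also have "\<dots> = d"
    using upper lower by (intro antisym) (auto simp: Max_le_iff intro: le_trans[OF _ Max_ge])
  finally show ?thesis
    by (simp add: P_def d_def)
qed

theorem theorem5:
  fixes n k \<tau> :: nat and u :: "nat \<Rightarrow> 'a::{field,finite}"
    and S :: "nat set set" and idx :: "nat \<Rightarrow> nat"
  assumes card: "card (UNIV :: 'a set) = 2 ^ n"
    and nk: "n = 2 * k"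
    and tau: "1 \<le> \<tau>" "\<tau> \<le> k"
    and u_dist: "\<forall>i<k. \<forall>j<k. i \<noteq> j \<longrightarrow> u i \<noteq> u j"
    and u_prod: "\<forall>i<k. \<forall>j<k. i < j \<longrightarrow> u i * u j ^ (2 ^ k) \<in> subF k - {0}"
    and F: "reduced_poly \<tau> S"
    and idx: "inj_on idx {..<\<tau>}" "idx ` {..<\<tau>} \<subseteq> {..<k}"
  defines "H \<equiv> (\<lambda>x. x ^ (2 ^ k + 1) +
             (if poly_eval S (\<lambda>j. tr n (u (idx j) * x) \<noteq> 0) then 1 else 0))"
  shows "vectorial_bent n k H \<and>
         (F2_lin_indep (\<lambda>j. u (idx j)) \<tau> \<and> poly_degree S \<ge> 2 \<longrightarrow>
            (\<forall>e w. F2_basis e n UNIV \<and> F2_basis w k (subF k) \<longrightarrow>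
               vec_alg_degree e n w k H = poly_degree S))"
proof -
  have card_2k: "card (UNIV :: 'a set) = 2 ^ (2 * k)"
    using card nk by simp
  have conj_mult: "u (idx i) ^ 2 ^ k * u (idx j) \<in> subF k" if "i < \<tau>" "j < \<tau>" for i j
    using conj_mult_in_subF_if_ordered[OF card_2k, of k u "idx i" "idx j"] u_prod idx(2) that by auto
  have H: "H = (\<lambda>x. x ^ (2 ^ k + 1) + of_bool (poly_eval S (\<lambda>j. tr (2 * k) (u (idx j) * x) \<noteq> 0)))"
    unfolding H_def nk of_bool_def ..
  have "vectorial_bent (2 * k) k H"
    unfolding H by (rule vectorial_bent_norm_plus_function_of_linear_forms[OF card_2k conj_mult poly_eval_cong[OF F]])
  moreover have "vec_alg_degree e (2 * k) w k H = poly_degree S"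
    if "F2_lin_indep (\<lambda>j. u (idx j)) \<tau>" "2 \<le> poly_degree S" "F2_basis e (2 * k) UNIV" "F2_basis w k (subF k)"
    for e w
    unfolding H using vec_alg_degree_norm_plus_poly_eval[OF card_2k F that(1,2) tau(2) that(3,4)] .
  ultimately show ?thesis
    unfolding nk by blast
qed

end
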